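(* Let $C$ be a convex set in the plane of diameter $d$, and let $pq$ be a straight-line segment that intersects $C$. Then for every point $r\in C$, $\min\{|rp|,|rq|\}\le \sqrt{d^2+|pq|^2/4}$.
   Context: $|xy|$ denotes the Euclidean distance between points $x$ and $y$. *)

theory Defs
  imports "HOL-Analysis.Analysis"
begin

end

theory Submission
  imports Defs
begin

text \<open>Only two points of \<open>C\<close> matter: \<open>r\<close> and a point \<open>x\<close> of the segment lying in \<open>C\<close>, so
  \<open>|rx| \<le> d\<close>. By Stewart's theorem, a convex combination of \<open>|rp|\<^sup>2\<close> and \<open>|rq|\<^sup>2\<close>
  equals \<open>|rx|\<^sup>2 + t(1-t)|pq|\<^sup>2 \<le> d\<^sup>2 + |pq|\<^sup>2/4\<close>, and the smaller of the two squares
  is bounded by that combination.\<close>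

lemma stewart_dist:
  fixes p q r :: "'a::real_inner" and t :: real
  shows "(1 - t) * (dist r p)\<^sup>2 + t * (dist r q)\<^sup>2
       = (dist r ((1 - t) *\<^sub>R p + t *\<^sub>R q))\<^sup>2 + t * (1 - t) * (dist p q)\<^sup>2"
proof -
  have "r - ((1 - t) *\<^sub>R p + t *\<^sub>R q) = (r - p) - t *\<^sub>R (q - p)"
    by (simp add: algebra_simps)
  moreover have "r - q = (r - p) - (q - p)" by simp
  ultimately show ?thesis
    unfolding dist_norm norm_minus_commute[of p q]
    by (simp add: power2_norm_eq_inner inner_diff_left inner_diff_right algebra_simps inner_commute)
qed

lemma min_dist_endpoints_sq_le:
  fixes p q r x :: "'a::real_inner"
  assumes "x \<in> closed_segment p q"
  shows "(min (dist r p) (dist r q))\<^sup>2 \<le> (dist r x)\<^sup>2 + (dist p q)\<^sup>2 / 4"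
proof -
  obtain t where t: "0 \<le> t" "t \<le> 1" "x = (1 - t) *\<^sub>R p + t *\<^sub>R q"
    using assms by (auto simp: closed_segment_def)
  let ?m = "min (dist r p) (dist r q)"
  have "?m\<^sup>2 = (1 - t) * ?m\<^sup>2 + t * ?m\<^sup>2" by (simp add: algebra_simps)
  also have "\<dots> \<le> (1 - t) * (dist r p)\<^sup>2 + t * (dist r q)\<^sup>2"
    by (intro add_mono mult_left_mono power_mono) (use t in auto)
  also have "\<dots> = (dist r x)\<^sup>2 + t * (1 - t) * (dist p q)\<^sup>2"
    unfolding t(3) by (rule stewart_dist)
  also have "\<dots> \<le> (dist r x)\<^sup>2 + (dist p q)\<^sup>2 / 4"
  proof -
    have "t * (1 - t) \<le> 1 / 4"
      using zero_le_power2[of "t - 1/2"] by (simp add: power2_eq_square algebra_simps)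
    then show ?thesis
      using mult_right_mono[of "t * (1 - t)" "1/4" "(dist p q)\<^sup>2"] by simp
  qed
  finally show ?thesis .
qed

theorem lemma1:
  fixes C :: "(real ^ 2) set" and p q r :: "real ^ 2" and d :: real
  assumes "convex C" and "bounded C" and "diameter C = d"
    and "closed_segment p q \<inter> C \<noteq> {}"
    and "r \<in> C"
  shows "min (dist r p) (dist r q) \<le> sqrt (d\<^sup>2 + (dist p q)\<^sup>2 / 4)"
proof -
  obtain x where x: "x \<in> closed_segment p q" "x \<in> C"
    using assms(4) by blast
  have "dist r x \<le> d"
    using diameter_bounded_bound[OF assms(2) assms(5) x(2)] assms(3) by simp
  then have "(dist r x)\<^sup>2 \<le> d\<^sup>2" by (simp add: power_mono)
  with min_dist_endpoints_sq_le[OF x(1), of r]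
  have "(min (dist r p) (dist r q))\<^sup>2 \<le> d\<^sup>2 + (dist p q)\<^sup>2 / 4" by linarith
  then show ?thesis by (simp add: real_le_rsqrt)
qed

end
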